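(* Let $\mathcal{C}$ be a non-attacking $q$-configuration. Then there exists $N$ such that for all $n \ge N$ we have $\mathcal{C} \subset \mathcal{B}_n$ and $$\mathrm{cover}_n(\mathcal{C}) = (4n-3)q - \mathrm{inloss}_n(\mathcal{C}) - \mathrm{cenloss}_n(\mathcal{C}).$$
   Context: For $n \in \mathbb{N}$ let $I_n = \{\lfloor (2-n)/2 \rfloor, \ldots, \lfloor n/2 \rfloor\}$ and $\mathcal{B}_n = I_n \times I_n$. A configuration is a finite set $\mathcal{C} \subset \mathbb{Z}\times\mathbb{Z}$; a $q$-configuration has $|\mathcal{C}|=q$. For $Q=(x,y)$, $A(Q) = \{(x+i,y),(x,y+i),(x+i,y+i),(x+i,y-i) : i \in \mathbb{Z}\setminus\{0\}\}$, $A(\mathcal{C}) = \bigcup_{Q\in\mathcal{C}} A(Q)$, and $\mathrm{cover}_n(\mathcal{C}) = |(\mathcal{C}\cup A(\mathcal{C}))\cap \mathcal{B}_n|$. $\mathcal{C}$ is non-attacking if $Q'\notin A(Q)$ for all distinct $Q,Q'\in\mathcal{C}$. The attacking number is $a_{\mathcal{C}}(s) = \#\{Q \in \mathcal{C} : s \in A(Q)\}$ and the internal loss is $\mathrm{inloss}_n(\mathcal{C}) = \sum_{s \in A(\mathcal{C})\cap\mathcal{B}_n} (a_{\mathcal{C}}(s) - 1)$. The centralized loss of a Queen $Q=(x,y)$ on $\mathcal{B}_n$ is $\mathrm{cenloss}_n(Q) = 2\max\{|x|,|y|\}$ if $n$ is odd, and $\mathrm{cenloss}_n(Q) = 1 +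 2\min_{c}\max\{|x-c_1|,|y-c_2|\}$ if $n$ is even, the minimum over the four central squares $c=(c_1,c_2)\in\{(0,0),(1,0),(0,1),(1,1)\}$; and $\mathrm{cenloss}_n(\mathcal{C}) = \sum_{Q\in\mathcal{C}}\mathrm{cenloss}_n(Q)$. *)

theory Defs
  imports Main
begin

type_synonym square = "int \<times> int"

definition I :: "nat \<Rightarrow> int set" where
  "I n = {(2 - int n) div 2 .. int n div 2}"
(* integer div rounds toward -infinity, so (2-n) div 2 = floor((2-n)/2) *)

definition B :: "nat \<Rightarrow> square set" where
  "B n = I n \<times> I n"

definition attacks :: "square \<Rightarrow> square set" where
  "attacks Q = (case Q of (x, y) \<Rightarrow>
     {(x + i, y) | i. i \<noteq> 0} \<union> {(x, y + i) | i. i \<noteq> 0} \<union>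
     {(x + i, y + i) | i. i \<noteq> 0} \<union> {(x + i, y - i) | i. i \<noteq> 0})"

definition attacksC :: "square set \<Rightarrow> square set" where
  "attacksC C = (\<Union>Q\<in>C. attacks Q)"

definition cover :: "nat \<Rightarrow> square set \<Rightarrow> nat" where
  "cover n C = card ((C \<union> attacksC C) \<inter> B n)"

definition non_attacking :: "square set \<Rightarrow> bool" where
  "non_attacking C \<longleftrightarrow> (\<forall>Q\<in>C. \<forall>Q'\<in>C. Q \<noteq> Q' \<longrightarrow> Q' \<notin> attacks Q)"

definition attacking_number :: "square set \<Rightarrow> square \<Rightarrow> nat" where
  "attacking_number C s = card {Q \<in> C. s \<in> attacks Q}"

definition inloss :: "nat \<Rightarrow> square set \<Rightarrow> int" where
  "inloss n C = (\<Sum>s\<in>attacksC C \<inter> B n. int (attacking_number C s) - 1)"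

definition cenloss_queen :: "nat \<Rightarrow> square \<Rightarrow> int" where
  "cenloss_queen n Q = (case Q of (x, y) \<Rightarrow>
     if odd n then 2 * max \<bar>x\<bar> \<bar>y\<bar>
     else 1 + 2 * Min ((\<lambda>(c1, c2). max \<bar>x - c1\<bar> \<bar>y - c2\<bar>) ` {(0,0),(1,0),(0,1),(1,1)}))"

definition cenloss :: "nat \<Rightarrow> square set \<Rightarrow> int" where
  "cenloss n C = (\<Sum>Q\<in>C. cenloss_queen n Q)"

end

theory Submission
  imports Defs
begin

(* A queen at (x, y) of the box {lo..hi}^2 attacks hi - lo squares of the box along its row and
   along its column, and its two diagonals fall short of that by |x - y| and |x + y - (lo + hi)|.
   For B n we have hi - lo = n - 1 and lo + hi = 0 (n odd) or 1 (n even); the two shortfalls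
   then add up to twice the max-norm distance from (x, y) to the centre point of B n, which is
   cenloss n (x, y).  Summing over the queens counts every attacked square s of B n exactly a(s)
   times, i.e. |A(C) \<inter> B n| + inloss n C in total, and non-attacking queens occupy no
   attacked square, so cover n C = q + |A(C) \<inter> B n|. *)

lemma card_Icc_minus_zero:
  assumes "l \<le> 0" and "0 \<le> u"
  shows "int (card ({l..u} - {0::int})) = u - l"
  using assms by simp

lemma card_queen_lines:
  fixes x y :: int
  assumes "finite R" "finite S" "finite D" "finite E" and "0 \<notin> R" "0 \<notin> S" "0 \<notin> D" "0 \<notin> E"
  shows "card ((\<lambda>i. (x + i, y)) ` R \<union> (\<lambda>i. (x, y + i)) ` S \<union> (\<lambda>i. (x + i, y + i)) ` D \<union>
                (\<lambda>i. (x + i, y - i)) ` E) = card R + card S + card D + card E"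
  using assms by (subst card_Un_disjoint; auto simp: card_image inj_on_def)+

lemma card_attacks_inter_box:
  assumes "x \<in> {lo..hi}" and "y \<in> {lo..hi}"
  shows "int (card (attacks (x, y) \<inter> {lo..hi} \<times> {lo..hi})) =
           4 * (hi - lo) - \<bar>x - y\<bar> - \<bar>x + y - (lo + hi)\<bar>"
proof -
  define R S D E where
    "R = {lo - x..hi - x} - {0}" and "S = {lo - y..hi - y} - {0}" and
    "D = {max (lo - x) (lo - y)..min (hi - x) (hi - y)} - {0}" and
    "E = {max (lo - x) (y - hi)..min (hi - x) (y - lo)} - {0}"
  have lines: "attacks (x, y) \<inter> {lo..hi} \<times> {lo..hi} =
      (\<lambda>i. (x + i, y)) ` R \<union> (\<lambda>i. (x, y + i)) ` S \<union> (\<lambda>i. (x + i, y + i)) ` D \<union> (\<lambda>i. (x + i, y - i)) ` E"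
    using assms by (auto simp: attacks_def R_def S_def D_def E_def)
  have "finite R" "finite S" "finite D" "finite E" and "0 \<notin> R" "0 \<notin> S" "0 \<notin> D" "0 \<notin> E"
    by (simp_all add: R_def S_def D_def E_def)
  then have "int (card (attacks (x, y) \<inter> {lo..hi} \<times> {lo..hi})) =
      int (card R) + int (card S) + int (card D) + int (card E)"
    unfolding lines by (simp add: card_queen_lines)
  moreover have "int (card R) = hi - lo" and "int (card S) = hi - lo"
    using assms unfolding R_def S_def by (subst card_Icc_minus_zero; simp)+
  moreover have "int (card D) = hi - lo - \<bar>x - y\<bar>"
  proof -
    have "min (hi - x) (hi - y) - max (lo - x) (lo - y) = hi - lo - \<bar>x - y\<bar>"
      by linarith
    then show ?thesis
      using assms unfolding D_def by (subst card_Icc_minus_zero) auto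
  qed
  moreover have "int (card E) = hi - lo - \<bar>x + y - (lo + hi)\<bar>"
  proof -
    have "min (hi - x) (y - lo) - max (lo - x) (y - hi) = hi - lo - \<bar>x + y - (lo + hi)\<bar>"
      by linarith
    then show ?thesis
      using assms unfolding E_def by (subst card_Icc_minus_zero) auto
  qed
  ultimately show ?thesis
    by simp
qed

lemma B_eq_box: "B n = {(2 - int n) div 2 .. int n div 2} \<times> {(2 - int n) div 2 .. int n div 2}"
  by (simp add: B_def I_def)

lemma finite_B: "finite (B n)"
  by (simp add: B_eq_box)

lemma I_bounds_diff: "int n div 2 - (2 - int n) div 2 = int n - 1"
  by presburger

lemma I_bounds_sum: "int n div 2 + (2 - int n) div 2 = of_bool (even n)"
  by (auto elim!: evenE oddE)

lemma cenloss_queen_eq_abs: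
  "cenloss_queen n (x, y) = \<bar>x - y\<bar> + \<bar>x + y - of_bool (even n)\<bar>"
proof -
  have cenloss: "cenloss_queen n (x, y) =
      (if odd n then 2 * max \<bar>x\<bar> \<bar>y\<bar>
       else 1 + 2 * min (max \<bar>x\<bar> \<bar>y\<bar>)
                      (min (max \<bar>x - 1\<bar> \<bar>y\<bar>) (min (max \<bar>x\<bar> \<bar>y - 1\<bar>) (max \<bar>x - 1\<bar> \<bar>y - 1\<bar>))))"
    unfolding cenloss_queen_def
    by (simp only: image_insert image_empty Min_insert Min_singleton finite_insert finite.emptyI
        insert_not_empty not_False_eq_True case_prod_conv diff_0_right)
  show ?thesis
  proof (cases "even n")
    case True
    then have "cenloss_queen n (x, y) =
        1 + 2 * min (max \<bar>x\<bar> \<bar>y\<bar>)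
                    (min (max \<bar>x - 1\<bar> \<bar>y\<bar>) (min (max \<bar>x\<bar> \<bar>y - 1\<bar>) (max \<bar>x - 1\<bar> \<bar>y - 1\<bar>)))"
      by (simp only: cenloss not_True_eq_False if_False)
    also have "\<dots> = \<bar>x - y\<bar> + \<bar>x + y - 1\<bar>"
      by (cases "x \<le> 0"; cases "y \<le> 0"; cases "x \<le> y"; simp add: abs_if max_def min_def)
    finally show ?thesis
      using True by simp
  next
    case False
    then have "cenloss_queen n (x, y) = 2 * max \<bar>x\<bar> \<bar>y\<bar>"
      by (simp only: cenloss not_False_eq_True if_True)
    also have "\<dots> = \<bar>x - y\<bar> + \<bar>x + y\<bar>"
      by linarith
    finally show ?thesis
      using False by simp
  qed
qed

lemma card_attacks_inter_B:
  assumes "Q \<in> B n"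
  shows "int (card (attacks Q \<inter> B n)) = 4 * int n - 4 - cenloss_queen n Q"
proof -
  obtain x y where Q: "Q = (x, y)"
    by fastforce
  define lo hi where "lo = (2 - int n) div 2" and "hi = int n div 2"
  have "x \<in> {lo..hi}" "y \<in> {lo..hi}"
    using assms by (simp_all add: Q B_eq_box lo_def hi_def)
  then have "int (card (attacks Q \<inter> B n)) = 4 * (hi - lo) - \<bar>x - y\<bar> - \<bar>x + y - (lo + hi)\<bar>"
    unfolding Q B_eq_box lo_def hi_def by (rule card_attacks_inter_box)
  moreover have "hi - lo = int n - 1" and "lo + hi = of_bool (even n)"
    using I_bounds_diff I_bounds_sum by (simp_all add: lo_def hi_def add.commute)
  ultimately show ?thesis
    by (simp add: Q cenloss_queen_eq_abs)
qed

lemma sum_attacking_number: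
  assumes "finite C" and "finite S"
  shows "(\<Sum>s\<in>attacksC C \<inter> S. attacking_number C s) = (\<Sum>Q\<in>C. card (attacks Q \<inter> S))"
proof -
  have "(\<Sum>s\<in>attacksC C \<inter> S. attacking_number C s) =
        (\<Sum>s\<in>attacksC C \<inter> S. \<Sum>Q\<in>C. of_bool (s \<in> attacks Q))"
    using assms(1) by (simp add: attacking_number_def Collect_conj_eq Int_commute)
  also have "\<dots> = (\<Sum>Q\<in>C. \<Sum>s\<in>attacksC C \<inter> S. of_bool (s \<in> attacks Q))"
    by (rule sum.swap)
  also have "\<dots> = (\<Sum>Q\<in>C. card (attacks Q \<inter> S))"
  proof (rule sum.cong)
    fix Q assume "Q \<in> C"
    then have "attacksC C \<inter> S \<inter> {s. s \<in> attacks Q} = attacks Q \<inter> S"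
      by (auto simp: attacksC_def)
    then show "(\<Sum>s\<in>attacksC C \<inter> S. of_bool (s \<in> attacks Q)) = card (attacks Q \<inter> S)"
      using assms(2) by simp
  qed simp
  finally show ?thesis .
qed

lemma self_notin_attacks: "Q \<notin> attacks Q"
  by (cases Q) (simp add: attacks_def)

lemma disjoint_attacksC:
  assumes "non_attacking C"
  shows "C \<inter> attacksC C = {}"
  using assms self_notin_attacks unfolding non_attacking_def attacksC_def by fastforce

lemma cover_eq_card_add:
  assumes "finite C" and "non_attacking C" and "C \<subseteq> B n"
  shows "cover n C = card C + card (attacksC C \<inter> B n)"
proof -
  have "(C \<union> attacksC C) \<inter> B n = C \<union> (attacksC C \<inter> B n)"
    using assms(3) by blast
  moreover have "C \<inter> (attacksC C \<inter> B n) = {}"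
    using disjoint_attacksC[OF assms(2)] by blast
  ultimately show ?thesis
    unfolding cover_def using assms(1) finite_B by (simp add: card_Un_disjoint)
qed

lemma inloss_eq_sum_minus_card:
  "inloss n C = (\<Sum>s\<in>attacksC C \<inter> B n. int (attacking_number C s)) - int (card (attacksC C \<inter> B n))"
  by (simp add: inloss_def sum_subtractf)

lemma cover_formula:
  assumes "finite C" and "non_attacking C" and "C \<subseteq> B n"
  shows "int (cover n C) = (4 * int n - 3) * int (card C) - inloss n C - cenloss n C"
proof -
  have "(\<Sum>s\<in>attacksC C \<inter> B n. int (attacking_number C s)) = (\<Sum>Q\<in>C. int (card (attacks Q \<inter> B n)))"
    using sum_attacking_number[OF assms(1) finite_B] by (metis of_nat_sum)
  also have "\<dots> = (\<Sum>Q\<in>C. 4 * int n - 4 - cenloss_queen n Q)"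
    using assms(3) by (intro sum.cong) (auto simp: card_attacks_inter_B)
  also have "\<dots> = (4 * int n - 4) * int (card C) - cenloss n C"
    by (simp add: sum_subtractf cenloss_def)
  finally show ?thesis
    using cover_eq_card_add[OF assms] inloss_eq_sum_minus_card[of n C] by (simp add: algebra_simps)
qed

lemma box_subset_B:
  assumes "2 * M + 2 \<le> int n"
  shows "{-M..M} \<times> {-M..M} \<subseteq> B n"
proof -
  have "(2 - int n) div 2 \<le> -M" and "M \<le> int n div 2"
    using assms by presburger+
  then show ?thesis
    by (auto simp: B_eq_box)
qed

lemma eventually_subset_B:
  assumes "finite C"
  shows "\<exists>N. \<forall>n\<ge>N. C \<subseteq> B n"
proof -
  obtain M where M: "\<forall>m\<in>(\<lambda>(x, y). nat (max \<bar>x\<bar> \<bar>y\<bar>)) ` C. m \<le> M"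
    using assms finite_nat_set_iff_bounded_le by blast
  have "C \<subseteq> {-int M..int M} \<times> {-int M..int M}"
    using M by fastforce
  moreover have "{-int M..int M} \<times> {-int M..int M} \<subseteq> B n" if "n \<ge> 2 * M + 2" for n
    using that by (intro box_subset_B) linarith
  ultimately show ?thesis
    by blast
qed

theorem mainTheorem5:
  fixes C :: "(int \<times> int) set" and q :: nat
  assumes "finite C" and "card C = q" and "non_attacking C"
  shows "\<exists>N::nat. \<forall>n\<ge>N. C \<subseteq> B n \<and>
           int (cover n C) = (4 * int n - 3) * int q - inloss n C - cenloss n C"
proof -
  obtain N where N: "\<forall>n\<ge>N. C \<subseteq> B n"
    using eventually_subset_B[OF assms(1)] by blast
  then have "\<forall>n\<ge>N. C \<subseteq> B n \<and>
      int (cover n C) = (4 * int n - 3) * int q - inloss n C - cenloss n C"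
    using cover_formula[OF assms(1,3)] assms(2) by simp
  then show ?thesis ..
qed

end
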